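(* Let $K\neq0$ and let $(\mathcal M,\rho)$ be a metric space such that $\operatorname{diam}(\mathcal M)\le\pi/(2\sqrt K)$ when $K>0$. If $(\mathcal M,\rho)$ satisfies the one-sided four point $\operatorname{cosq}_K$ condition, then every pair of points of $\mathcal M$ is joined by at most one shortest.
   Context: A shortest joining $P$ to $Q$ is a rectifiable curve from $P$ to $Q$ of length $\rho(P,Q)$ (curves identified up to reparametrization). Let $\kappa=\sqrt{|K|}$. For $A\neq P$, $B\neq Q$ (with $\rho(A,P),\rho(B,Q),\rho(A,B)<\pi/\sqrt K$ if $K>0$) put $x=\rho(A,P)$, $y=\rho(B,Q)$, $a=\rho(A,B)$, $b=\rho(P,Q)$, $d=\rho(P,B)$, $f=\rho(A,Q)$; for $K>0$ $$\operatorname{cosq}_K(\overrightarrow{AP},\overrightarrow{BQ})=\frac{\cos\kappa b+\cos\kappa x\cos\kappa y}{\sin\kappa x\sin\kappa y}-\frac{(\cos\kappa x+\cos\kappa d)(\cos\kappa y+\cos\kappa f)}{(1+\cos\kappa a)\sin\kappa x\sin\kappa y},$$ and for $K<0$ $$\operatorname{cosq}_K(\overrightarrow{AP},\overrightarrow{BQ})=\frac{(\cosh\kappa x+\cosh\kappa d)(\cosh\kappa y+\cosh\kappa f)}{(1+\cosh\kappa a)\sinh\kappa x\sinh\kappa y}-\frac{\cosh\kappa b+\cosh\kappa x\cosh\kappa y}{\sinh\kappa x\sinh\kappa y}.$$ Upper/lower four point $\operatorname{cosq}_K$ condition: $\operatorname{cosq}_K\le1$ / $\ge-1$ for all such quadruples;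 one-sided: at least one holds. *)

theory Defs
  imports "HOL-Analysis.Analysis"
begin

text \<open>The quadrilateral cosine cosq_K of the ordered pair of "vectors" AP, BQ,
  for curvature parameter K (nonzero), with kappa = sqrt |K|.\<close>
definition cosq :: "real \<Rightarrow> 'a::metric_space \<Rightarrow> 'a \<Rightarrow> 'a \<Rightarrow> 'a \<Rightarrow> real" where
  "cosq K A P B Q =
    (let \<kappa> = sqrt \<bar>K\<bar>;
         x = dist A P; y = dist B Q; a = dist A B;
         b = dist P Q; d = dist P B; f = dist A Q
     in if K > 0 then
          (cos (\<kappa>*b) + cos (\<kappa>*x) * cos (\<kappa>*y)) / (sin (\<kappa>*x) * sin (\<kappa>*y))
          - ((cos (\<kappa>*x) + cos (\<kappa>*d)) * (cos (\<kappa>*y) + cos (\<kappa>*f)))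
              / ((1 + cos (\<kappa>*a)) * sin (\<kappa>*x) * sin (\<kappa>*y))
        else
          ((cosh (\<kappa>*x) + cosh (\<kappa>*d)) * (cosh (\<kappa>*y) + cosh (\<kappa>*f)))
              / ((1 + cosh (\<kappa>*a)) * sinh (\<kappa>*x) * sinh (\<kappa>*y))
          - (cosh (\<kappa>*b) + cosh (\<kappa>*x) * cosh (\<kappa>*y)) / (sinh (\<kappa>*x) * sinh (\<kappa>*y)))"

definition cosq_admissible :: "real \<Rightarrow> 'a::metric_space \<Rightarrow> 'a \<Rightarrow> 'a \<Rightarrow> 'a \<Rightarrow> bool" where
  "cosq_admissible K A P B Q \<longleftrightarrow> A \<noteq> P \<and> B \<noteq> Q \<and>
     (K > 0 \<longrightarrow> dist A P < pi / sqrt K \<and> dist B Q < pi / sqrt K \<and> dist A B < pi / sqrt K)"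

definition upper_cosq_condition :: "real \<Rightarrow> 'a::metric_space itself \<Rightarrow> bool" where
  "upper_cosq_condition K (_ :: 'a itself) \<longleftrightarrow>
     (\<forall>A P B Q :: 'a. cosq_admissible K A P B Q \<longrightarrow> cosq K A P B Q \<le> 1)"

definition lower_cosq_condition :: "real \<Rightarrow> 'a::metric_space itself \<Rightarrow> bool" where
  "lower_cosq_condition K (_ :: 'a itself) \<longleftrightarrow>
     (\<forall>A P B Q :: 'a. cosq_admissible K A P B Q \<longrightarrow> cosq K A P B Q \<ge> -1)"

definition one_sided_cosq_condition :: "real \<Rightarrow> 'a::metric_space itself \<Rightarrow> bool" where
  "one_sided_cosq_condition K T \<longleftrightarrow> upper_cosq_condition K T \<or> lower_cosq_condition K T"

definition polygon_sums :: "(real \<Rightarrow> 'a::metric_space) \<Rightarrow> real \<Rightarrow> real \<Rightarrow> real set" where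
  "polygon_sums \<gamma> a b = {(\<Sum>i<n. dist (\<gamma> (t i)) (\<gamma> (t (Suc i)))) | t n.
       t 0 = a \<and> t n = b \<and> (\<forall>i<n. t i \<le> t (Suc i))}"

definition curve_length :: "(real \<Rightarrow> 'a::metric_space) \<Rightarrow> real \<Rightarrow> real \<Rightarrow> real" where
  "curve_length \<gamma> a b = Sup (polygon_sums \<gamma> a b)"

definition rectifiable_curve :: "(real \<Rightarrow> 'a::metric_space) \<Rightarrow> real \<Rightarrow> real \<Rightarrow> bool" where
  "rectifiable_curve \<gamma> a b \<longleftrightarrow> a \<le> b \<and> continuous_on {a..b} \<gamma> \<and> bdd_above (polygon_sums \<gamma> a b)"

definition shortest :: "'a::metric_space \<Rightarrow> 'a \<Rightarrow> (real \<Rightarrow> 'a) \<Rightarrow> real \<Rightarrow> real \<Rightarrow> bool" where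
  "shortest P Q \<gamma> a b \<longleftrightarrow> rectifiable_curve \<gamma> a b \<and> \<gamma> a = P \<and> \<gamma> b = Q \<and>
     curve_length \<gamma> a b = dist P Q"

text \<open>Two rectifiable curves are identified up to reparametrization iff they have the same
  arc-length (natural) parametrization: points at equal arc length from the start coincide
  (and the total lengths agree).\<close>
definition same_curve :: "(real \<Rightarrow> 'a::metric_space) \<Rightarrow> real \<Rightarrow> real \<Rightarrow> (real \<Rightarrow> 'a) \<Rightarrow> real \<Rightarrow> real \<Rightarrow> bool" where
  "same_curve \<gamma>1 a1 b1 \<gamma>2 a2 b2 \<longleftrightarrow>
     curve_length \<gamma>1 a1 b1 = curve_length \<gamma>2 a2 b2 \<and>
     (\<forall>s\<in>{a1..b1}. \<forall>t\<in>{a2..b2}.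
        curve_length \<gamma>1 a1 s = curve_length \<gamma>2 a2 t \<longrightarrow> \<gamma>1 s = \<gamma>2 t)"

end

theory Submission
  imports Defs
begin

text \<open>Points at equal arc length s from P on two shortests from P to Q are points X, Y with
  \<open>\<rho>(P,X) = \<rho>(P,Y) = s\<close> and \<open>\<rho>(X,Q) = \<rho>(Y,Q) = \<rho>(P,Q) - s\<close>. If X \<noteq> Y, the comparison
  formulas give \<open>cosq\<^sub>K(PX, YQ) > 1\<close> and \<open>cosq\<^sub>K(PX, QY) < -1\<close>, so both the upper and the
  lower four point condition fail. The diameter bound for K > 0 keeps all angles in
  \<open>[0, \<pi>/2]\<close>, where the cosines involved are nonnegative.\<close>

lemma polygon_sums_segment: "a \<le> b \<Longrightarrow> dist (\<gamma> a) (\<gamma> b) \<in> polygon_sums \<gamma> a b"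
  unfolding polygon_sums_def
  by (rule CollectI, rule exI[of _ "\<lambda>i. if i = 0 then a else b"], rule exI[of _ 1]) auto

lemma polygon_sums_append:
  assumes "u \<in> polygon_sums \<gamma> a s" "v \<in> polygon_sums \<gamma> s b"
  shows "u + v \<in> polygon_sums \<gamma> a b"
proof -
  from assms(1) obtain t1 n1 where u: "u = (\<Sum>i<n1. dist (\<gamma> (t1 i)) (\<gamma> (t1 (Suc i))))"
    "t1 0 = a" "t1 n1 = s" "\<forall>i<n1. t1 i \<le> t1 (Suc i)" unfolding polygon_sums_def by blast
  from assms(2) obtain t2 n2 where v: "v = (\<Sum>i<n2. dist (\<gamma> (t2 i)) (\<gamma> (t2 (Suc i))))"
    "t2 0 = s" "t2 n2 = b" "\<forall>i<n2. t2 i \<le> t2 (Suc i)" unfolding polygon_sums_def by blast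
  define t where "t = (\<lambda>i. if i \<le> n1 then t1 i else t2 (i - n1))"
  define g where "g = (\<lambda>i. dist (\<gamma> (t i)) (\<gamma> (t (Suc i))))"
  have sum_left: "(\<Sum>i<n1. g i) = u" unfolding u g_def t_def by (intro sum.cong) auto
  have sum_right: "(\<Sum>i<n2. g (n1 + i)) = v"
  proof -
    have "g (n1 + i) = dist (\<gamma> (t2 i)) (\<gamma> (t2 (Suc i)))" for i
      using u(3) v(2) unfolding g_def t_def by (cases i) auto
    then show ?thesis unfolding v by simp
  qed
  have "(\<Sum>i<n1+n2. g i) = (\<Sum>i<n1. g i) + (\<Sum>i<n2. g (n1 + i))"
    by (induct n2) (simp_all add: algebra_simps)
  then have sum: "(\<Sum>i<n1+n2. g i) = u + v" using sum_left sum_right by simp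
  have mono: "\<forall>i<n1+n2. t i \<le> t (Suc i)"
  proof (intro allI impI)
    fix i assume "i < n1 + n2"
    show "t i \<le> t (Suc i)"
    proof (cases "i < n1")
      case True then show ?thesis using u(4) unfolding t_def by auto
    next
      case False
      then have "i - n1 < n2" "Suc i - n1 = Suc (i - n1)" using \<open>i < n1 + n2\<close> by auto
      then show ?thesis using False v(4) u(3) v(2) unfolding t_def
        by (cases "i = n1") auto
    qed
  qed
  have "t 0 = a" "t (n1+n2) = b" using u v unfolding t_def by (auto simp: le_Suc_eq)
  then show ?thesis unfolding polygon_sums_def mem_Collect_eq
    by (intro exI[of _ t] exI[of _ "n1+n2"]) (use sum mono in \<open>auto simp: g_def\<close>)
qed

lemma bdd_above_polygon_sums_subinterval:
  assumes "bdd_above (polygon_sums \<gamma> a b)" "a \<le> s" "s \<le> b"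
  shows "bdd_above (polygon_sums \<gamma> a s)" "bdd_above (polygon_sums \<gamma> s b)"
proof -
  from assms(1) obtain M where M: "\<And>x. x \<in> polygon_sums \<gamma> a b \<Longrightarrow> x \<le> M"
    by (auto simp: bdd_above_def)
  show "bdd_above (polygon_sums \<gamma> a s)"
  proof (rule bdd_aboveI)
    fix x assume "x \<in> polygon_sums \<gamma> a s"
    then have "x + dist (\<gamma> s) (\<gamma> b) \<in> polygon_sums \<gamma> a b"
      using polygon_sums_append polygon_sums_segment assms by blast
    then show "x \<le> M"
      using M[of "x + dist (\<gamma> s) (\<gamma> b)"] zero_le_dist[of "\<gamma> s" "\<gamma> b"] by linarith
  qed
  show "bdd_above (polygon_sums \<gamma> s b)"
  proof (rule bdd_aboveI)
    fix x assume "x \<in> polygon_sums \<gamma> s b"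
    then have "dist (\<gamma> a) (\<gamma> s) + x \<in> polygon_sums \<gamma> a b"
      using polygon_sums_append polygon_sums_segment assms by blast
    then show "x \<le> M"
      using M[of "dist (\<gamma> a) (\<gamma> s) + x"] zero_le_dist[of "\<gamma> a" "\<gamma> s"] by linarith
  qed
qed

lemma cSup_add_le_cSup:
  fixes A B C :: "'a::{conditionally_complete_linorder, ordered_ab_group_add} set"
  assumes "A \<noteq> {}" "B \<noteq> {}" "bdd_above C" "\<And>x y. x \<in> A \<Longrightarrow> y \<in> B \<Longrightarrow> x + y \<in> C"
  shows "Sup A + Sup B \<le> Sup C"
proof -
  have "Sup A \<le> Sup C - Sup B"
  proof (rule cSup_least[OF assms(1)])
    fix x assume x: "x \<in> A"
    have "Sup B \<le> Sup C - x"
    proof (rule cSup_least[OF assms(2)])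
      fix y assume "y \<in> B"
      then have "x + y \<le> Sup C" using cSup_upper[OF assms(4)[OF x] assms(3)] by simp
      then show "y \<le> Sup C - x" by (simp add: le_diff_eq add.commute)
    qed
    then show "x \<le> Sup C - Sup B" by (simp add: le_diff_eq add.commute)
  qed
  then show ?thesis by (simp add: le_diff_eq)
qed

lemma curve_length_superadditive:
  assumes "bdd_above (polygon_sums \<gamma> a b)" "a \<le> s" "s \<le> b"
  shows "curve_length \<gamma> a s + curve_length \<gamma> s b \<le> curve_length \<gamma> a b"
  unfolding curve_length_def
  by (rule cSup_add_le_cSup) (use polygon_sums_segment assms polygon_sums_append in blast)+

lemma dist_le_curve_length:
  assumes "bdd_above (polygon_sums \<gamma> a b)" "a \<le> b"
  shows "dist (\<gamma> a) (\<gamma> b) \<le> curve_length \<gamma> a b"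
  unfolding curve_length_def using cSup_upper[OF polygon_sums_segment[OF assms(2)] assms(1)] .

lemma shortest_point_dists:
  assumes "shortest P Q \<gamma> a b" "s \<in> {a..b}"
  shows "dist P (\<gamma> s) = curve_length \<gamma> a s" "dist (\<gamma> s) Q = dist P Q - curve_length \<gamma> a s"
proof -
  have bdd: "bdd_above (polygon_sums \<gamma> a b)"
    and ends: "\<gamma> a = P" "\<gamma> b = Q" "curve_length \<gamma> a b = dist P Q"
    using assms(1) unfolding shortest_def rectifiable_curve_def by auto
  have s: "a \<le> s" "s \<le> b" using assms(2) by auto
  have "dist P (\<gamma> s) \<le> curve_length \<gamma> a s"
    using dist_le_curve_length[OF bdd_above_polygon_sums_subinterval(1)[OF bdd s] s(1)] ends by simp
  moreover have "dist (\<gamma> s) Q \<le> curve_length \<gamma> s b"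
    using dist_le_curve_length[OF bdd_above_polygon_sums_subinterval(2)[OF bdd s] s(2)] ends by simp
  moreover have "curve_length \<gamma> a s + curve_length \<gamma> s b \<le> dist P Q"
    using curve_length_superadditive[OF bdd s] ends by simp
  moreover have "dist P Q \<le> dist P (\<gamma> s) + dist (\<gamma> s) Q" by (rule dist_triangle)
  ultimately show "dist P (\<gamma> s) = curve_length \<gamma> a s" "dist (\<gamma> s) Q = dist P Q - curve_length \<gamma> a s"
    by linarith+
qed

text \<open>The values of \<open>cosq\<^sub>K(PX, YQ)\<close> and \<open>cosq\<^sub>K(PX, QY)\<close> in that configuration, with the
  distances scaled by \<open>\<kappa>\<close>: \<open>s = \<kappa>\<rho>(P,X)\<close>, \<open>t = \<kappa>\<rho>(X,Q)\<close>, \<open>e = \<kappa>\<rho>(X,Y)\<close>. Each differs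
  from \<open>\<plusminus>1\<close> by a positive multiple of \<open>1 - cos e\<close> resp. \<open>cosh e - 1\<close>.\<close>

lemma spherical_cosq_gt_one:
  fixes s t e :: real
  assumes "0 < s" "0 < t" "s + t \<le> pi/2" "0 < e" "e \<le> pi/2"
  shows "(cos t + cos s * cos t) / (sin s * sin t)
           - ((cos s + cos e) * (cos t + cos (s + t))) / ((1 + cos s) * sin s * sin t) > 1"
proof -
  have pos: "sin s > 0" "sin t > 0" "cos s > 0" "cos t > 0" "cos (s + t) \<ge> 0"
    using assms by (auto intro!: sin_gt_zero cos_gt_zero cos_ge_zero)
  moreover have "cos e < 1" using cos_monotone_0_pi[of 0 e] assms by auto
  ultimately have excess: "(1 - cos e) * (cos t + cos (s + t)) / ((1 + cos s) * sin s * sin t) > 0"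
    by (simp add: add_pos_nonneg)
  define D where "D = (1 + cos s) * sin s * sin t"
  have "D > 0" using pos unfolding D_def by (simp add: add_pos_pos)
  have "(cos t + cos s * cos t) / (sin s * sin t)
          - ((cos s + cos e) * (cos t + cos (s + t))) / D
        = ((1 + cos s) * (cos t + cos s * cos t) - (cos s + cos e) * (cos t + cos (s + t))) / D"
    using pos \<open>D > 0\<close> unfolding D_def by (simp add: divide_simps)
  also have "\<dots> = (D + (1 - cos e) * (cos t + cos (s + t))) / D"
    unfolding D_def cos_add by (simp add: algebra_simps)
  also have "\<dots> = 1 + (1 - cos e) * (cos t + cos (s + t)) / D"
    using \<open>D > 0\<close> by (simp add: add_divide_distrib)
  finally show ?thesis using excess unfolding D_def by simp
qed

lemma spherical_cosq_lt_minus_one: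
  fixes s t e :: real
  assumes "0 < s" "0 < t" "s + t \<le> pi/2" "0 < e" "e \<le> pi/2"
  shows "(cos e + cos s * cos t) / (sin s * sin t)
           - ((cos s + cos t) * (cos t + cos s)) / ((1 + cos (s + t)) * sin s * sin t) < -1"
proof -
  have pos: "sin s > 0" "sin t > 0" "cos (s + t) \<ge> 0"
    using assms by (auto intro!: sin_gt_zero cos_ge_zero)
  moreover have "cos e < 1" using cos_monotone_0_pi[of 0 e] assms by auto
  ultimately have excess: "(1 - cos e) / (sin s * sin t) > 0" by simp
  have "(cos s + cos t) * (cos t + cos s) = (1 + cos (s + t)) * (1 + cos s * cos t + sin s * sin t)"
    using sin_cos_squared_add[of s] sin_cos_squared_add[of t] unfolding cos_add by algebra
  then have "((cos s + cos t) * (cos t + cos s)) / ((1 + cos (s + t)) * sin s * sin t)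
           = (1 + cos s * cos t + sin s * sin t) / (sin s * sin t)"
    using pos by simp
  then show ?thesis using pos excess by (simp add: diff_divide_distrib add_divide_distrib)
qed

lemma hyperbolic_cosq_gt_one:
  fixes s t e :: real
  assumes "0 < s" "0 < t" "0 < e"
  shows "((cosh s + cosh e) * (cosh t + cosh (s + t))) / ((1 + cosh s) * sinh s * sinh t)
           - (cosh t + cosh s * cosh t) / (sinh s * sinh t) > 1"
proof -
  have pos: "sinh s > 0" "sinh t > 0" "cosh e > 1"
    using assms cosh_real_ge_1[of e] cosh_real_one_iff[of e] by (auto simp: less_le)
  then have excess: "(cosh e - 1) * (cosh t + cosh (s + t)) / ((1 + cosh s) * sinh s * sinh t) > 0"
    by (simp add: add_pos_pos)
  define D where "D = (1 + cosh s) * sinh s * sinh t"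
  have "1 + cosh s > 0" by (simp add: add_pos_pos)
  then have "D > 0" using pos unfolding D_def by simp
  have "((cosh s + cosh e) * (cosh t + cosh (s + t))) / D - (cosh t + cosh s * cosh t) / (sinh s * sinh t)
        = ((cosh s + cosh e) * (cosh t + cosh (s + t)) - (1 + cosh s) * (cosh t + cosh s * cosh t)) / D"
    using pos \<open>D > 0\<close> \<open>1 + cosh s > 0\<close> unfolding D_def by (simp add: divide_simps)
  also have "\<dots> = (D + (cosh e - 1) * (cosh t + cosh (s + t))) / D"
    unfolding D_def cosh_add by (simp add: algebra_simps)
  also have "\<dots> = 1 + (cosh e - 1) * (cosh t + cosh (s + t)) / D"
    using \<open>D > 0\<close> by (simp add: add_divide_distrib)
  finally show ?thesis using excess unfolding D_def by simp
qed

lemma hyperbolic_cosq_lt_minus_one: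
  fixes s t e :: real
  assumes "0 < s" "0 < t" "0 < e"
  shows "((cosh s + cosh t) * (cosh t + cosh s)) / ((1 + cosh (s + t)) * sinh s * sinh t)
           - (cosh e + cosh s * cosh t) / (sinh s * sinh t) < -1"
proof -
  have pos: "sinh s > 0" "sinh t > 0" "cosh e > 1"
    using assms cosh_real_ge_1[of e] cosh_real_one_iff[of e] by (auto simp: less_le)
  then have excess: "(cosh e - 1) / (sinh s * sinh t) > 0" by simp
  have "(cosh s + cosh t) * (cosh t + cosh s) = (1 + cosh (s + t)) * (1 + cosh s * cosh t - sinh s * sinh t)"
    using cosh_square_eq[of s] cosh_square_eq[of t] unfolding cosh_add by algebra
  then have "((cosh s + cosh t) * (cosh t + cosh s)) / ((1 + cosh (s + t)) * sinh s * sinh t)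
           = (1 + cosh s * cosh t - sinh s * sinh t) / (sinh s * sinh t)"
    using pos add_pos_pos[OF zero_less_one cosh_real_pos[of "s + t"]] by simp
  then show ?thesis using pos excess by (simp add: diff_divide_distrib add_divide_distrib)
qed

lemma cosq_at_two_equidistant_between_points:
  fixes P Q X Y :: "'a::metric_space"
  assumes "K \<noteq> 0"
    and small: "K > 0 \<Longrightarrow> sqrt K * dist P Q \<le> pi/2 \<and> sqrt K * dist X Y \<le> pi/2"
    and equi: "dist P X = dist P Y" "dist X Q = dist Y Q"
    and between: "dist P X + dist X Q = dist P Q"
    and "P \<noteq> X" "X \<noteq> Q" "X \<noteq> Y"
  shows "cosq K P X Y Q > 1" and "cosq K P X Q Y < -1"
proof -
  define k s t e where "k = sqrt \<bar>K\<bar>" and "s = dist P X" and "t = dist X Q" and "e = dist X Y"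
  have "k > 0" using \<open>K \<noteq> 0\<close> unfolding k_def by simp
  then have pos: "0 < k * s" "0 < k * t" "0 < k * e"
    using \<open>P \<noteq> X\<close> \<open>X \<noteq> Q\<close> \<open>X \<noteq> Y\<close> unfolding s_def t_def e_def by simp_all
  have dists: "dist X P = s" "dist P Y = s" "dist Y P = s" "dist Q X = t" "dist Y Q = t"
    "dist Q Y = t" "dist Y X = e" "dist P Q = s + t"
    using equi between unfolding s_def t_def e_def by (simp_all add: dist_commute)
  have add: "k * (s + t) = k * s + k * t" by (simp add: distrib_left)
  have "k * s + k * t \<le> pi/2 \<and> k * e \<le> pi/2" if "K > 0"
    using small[OF that] that dists add unfolding k_def e_def by simp
  then have "cosq K P X Y Q > 1 \<and> cosq K P X Q Y < -1"
    using spherical_cosq_gt_one[OF pos(1,2) _ pos(3)]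
      spherical_cosq_lt_minus_one[OF pos(1,2) _ pos(3)]
      hyperbolic_cosq_gt_one[OF pos] hyperbolic_cosq_lt_minus_one[OF pos]
    unfolding cosq_def Let_def k_def[symmetric] s_def[symmetric] t_def[symmetric]
      e_def[symmetric] dists add
    by auto
  then show "cosq K P X Y Q > 1" and "cosq K P X Q Y < -1" by auto
qed

lemma one_sided_cosq_equidistant_between_eq:
  fixes P Q X Y :: "'a::metric_space"
  assumes "K \<noteq> 0"
    and diam: "K > 0 \<Longrightarrow> \<forall>x y :: 'a. dist x y \<le> pi / (2 * sqrt K)"
    and cond: "one_sided_cosq_condition K TYPE('a)"
    and equi: "dist P X = dist P Y" "dist X Q = dist Y Q"
    and between: "dist P X + dist X Q = dist P Q"
  shows "X = Y"
proof (rule ccontr)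
  assume "X \<noteq> Y"
  with equi have "P \<noteq> X" "X \<noteq> Q" "Y \<noteq> Q" by auto
  have small: "sqrt K * dist x y \<le> pi / 2" if "K > 0" for x y :: 'a
    using diam[OF that] that by (simp add: field_simps)
  have "dist x y < pi / sqrt K" if "K > 0" for x y :: 'a
  proof -
    have "dist x y \<le> pi / (2 * sqrt K)" using diam[OF that] by blast
    also have "\<dots> < pi / sqrt K" using that by (simp add: divide_strict_left_mono)
    finally show ?thesis .
  qed
  then have "cosq_admissible K P X Y Q" "cosq_admissible K P X Q Y"
    using \<open>P \<noteq> X\<close> \<open>Y \<noteq> Q\<close> unfolding cosq_admissible_def by auto
  moreover have "cosq K P X Y Q > 1" "cosq K P X Q Y < -1"
    using cosq_at_two_equidistant_between_points[OF \<open>K \<noteq> 0\<close> _ equi between]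
      \<open>P \<noteq> X\<close> \<open>X \<noteq> Q\<close> \<open>X \<noteq> Y\<close> small by blast+
  ultimately show False using cond
    unfolding one_sided_cosq_condition_def upper_cosq_condition_def lower_cosq_condition_def
    by force
qed

theorem mainTheorem11:
  fixes K :: real
  assumes "K \<noteq> 0"
    and "K > 0 \<Longrightarrow> \<forall>x y :: 'a::metric_space. dist x y \<le> pi / (2 * sqrt K)"
    and "one_sided_cosq_condition K TYPE('a)"
  shows "\<forall>P Q :: 'a. \<forall>\<gamma>1 a1 b1 \<gamma>2 a2 b2.
           shortest P Q \<gamma>1 a1 b1 \<and> shortest P Q \<gamma>2 a2 b2 \<longrightarrow> same_curve \<gamma>1 a1 b1 \<gamma>2 a2 b2"
proof (intro allI impI)
  fix P Q :: 'a and \<gamma>1 a1 b1 \<gamma>2 a2 b2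
  assume "shortest P Q \<gamma>1 a1 b1 \<and> shortest P Q \<gamma>2 a2 b2"
  then have sh1: "shortest P Q \<gamma>1 a1 b1" and sh2: "shortest P Q \<gamma>2 a2 b2" by auto
  show "same_curve \<gamma>1 a1 b1 \<gamma>2 a2 b2"
    unfolding same_curve_def
  proof (intro conjI ballI impI)
    show "curve_length \<gamma>1 a1 b1 = curve_length \<gamma>2 a2 b2"
      using sh1 sh2 unfolding shortest_def by simp
  next
    fix u v assume "u \<in> {a1..b1}" "v \<in> {a2..b2}"
      and "curve_length \<gamma>1 a1 u = curve_length \<gamma>2 a2 v"
    with shortest_point_dists[OF sh1] shortest_point_dists[OF sh2]
    show "\<gamma>1 u = \<gamma>2 v"
      by (intro one_sided_cosq_equidistant_between_eq[OF assms, of P _ _ Q]) auto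
  qed
qed

end
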